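(* Let $k\geq 3$, $A=\{0,1,\dots,k-1\}$, $n=k-1$, let $T\colon A^{n^2}\to A$ be defined by $T(x_{1,1},\dots,x_{1,n},\dots,x_{n,1},\dots,x_{n,n})=1$ if $x_{i,j}=i$ for all $i,j\in\{1,\dots,n\}$ or $x_{i,j}=j$ for all $i,j\in\{1,\dots,n\}$, and $0$ otherwise, and let $f\colon A^{n}\to A$ be given by $f(\mathbf{x})=1$ if $\mathbf{x}\in\{(1,2,\dots,n),(n,\dots,2,1)\}$ and $f(\mathbf{x})=0$ otherwise. Then $f\in\{T\}^{**}\setminus\langle\{T\}\rangle$.
   Context: $\mathrm{Op}(A)$ denotes the set of all finitary operations $A^m\to A$ with $m\geq1$. An $m$-ary $g$ commutes with an $n$-ary $h$ if for every matrix $(x_{ij})\in A^{m\times n}$, $g\bigl((h((x_{ij})_{j}))_{i}\bigr)=h\bigl((g((x_{ij})_{i}))_{j}\bigr)$. For $F\subseteq\mathrm{Op}(A)$, the centraliser $F^*$ is the set of all $g\in\mathrm{Op}(A)$ commuting with every member of $F$, and $F^{**}=(F^* )^*$ is the bicentraliser. $\langle F\rangle$ denotes the clone generated by $F$ (all term operations of positive arity of the algebra $(A;F)$, including projections). *)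

theory Defs
  imports Main
begin

text \<open>A finitary operation on a carrier A is represented as a pair (m, g): its arity m
  and a function g on lists; only the values of g on lists of length m with entries
  in A are relevant.\<close>
type_synonym op = "nat \<times> (nat list \<Rightarrow> nat)"

definition is_op :: "nat set \<Rightarrow> op \<Rightarrow> bool" where
  "is_op A f \<longleftrightarrow> fst f \<ge> 1 \<and>
     (\<forall>xs. length xs = fst f \<and> set xs \<subseteq> A \<longrightarrow> snd f xs \<in> A)"

definition commutes :: "nat set \<Rightarrow> op \<Rightarrow> op \<Rightarrow> bool" where
  "commutes A gg hh \<longleftrightarrow> (let m = fst gg; g = snd gg; n = fst hh; h = snd hh in
     \<forall>x :: nat \<Rightarrow> nat \<Rightarrow> nat. (\<forall>i<m. \<forall>j<n. x i j \<in> A) \<longrightarrow>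
       g (map (\<lambda>i. h (map (\<lambda>j. x i j) [0..<n])) [0..<m])
       = h (map (\<lambda>j. g (map (\<lambda>i. x i j) [0..<m])) [0..<n]))"

definition centraliser :: "nat set \<Rightarrow> op set \<Rightarrow> op set" where
  "centraliser A F = {g. is_op A g \<and> (\<forall>h\<in>F. commutes A g h)}"

inductive_set clone_terms :: "nat set \<Rightarrow> op set \<Rightarrow> op set" for A F where
  proj: "1 \<le> m \<Longrightarrow> i < m \<Longrightarrow> (m, \<lambda>xs. xs ! i) \<in> clone_terms A F"
| base: "f \<in> F \<Longrightarrow> f \<in> clone_terms A F"
| comp: "(n, h) \<in> clone_terms A F \<Longrightarrow> length gs = n \<Longrightarrow> 1 \<le> m \<Longrightarrow>
         (\<forall>g\<in>set gs. (m, g) \<in> clone_terms A F) \<Longrightarrow>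
         (m, \<lambda>xs. h (map (\<lambda>g. g xs) gs)) \<in> clone_terms A F"

definition in_clone :: "nat set \<Rightarrow> op \<Rightarrow> op set \<Rightarrow> bool" where
  "in_clone A f F \<longleftrightarrow> is_op A f \<and> (\<exists>g. (fst f, g) \<in> clone_terms A F \<and>
     (\<forall>xs. length xs = fst f \<and> set xs \<subseteq> A \<longrightarrow> snd f xs = g xs))"

text \<open>T : A^(n^2) -> A, argument x_{i,j} (1-based) stored at position (i-1)*n + (j-1).\<close>
definition opT :: "nat \<Rightarrow> op" where
  "opT n = (n * n, \<lambda>xs.
     if (\<forall>i<n. \<forall>j<n. xs ! (i * n + j) = i + 1) \<or> (\<forall>i<n. \<forall>j<n. xs ! (i * n + j) = j + 1)
     then 1 else 0)"

definition opf :: "nat \<Rightarrow> op" where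
  "opf n = (n, \<lambda>xs. if xs = [1..<n+1] \<or> xs = rev [1..<n+1] then 1 else 0)"

end

theory Submission
  imports Defs
begin

text \<open>
  Write \<open>I = (1,\<dots>,n)\<close> and \<open>R = (n,\<dots>,1)\<close>. Feeding matrices that are constant along rows or
  columns shows that \<open>g\<close> sends the indicator of the columns of an \<open>n \<times> m\<close> matrix equal to
  \<open>I\<close> (or to \<open>R\<close>) to \<open>1\<close> iff \<open>g\<close> applied rowwise yields \<open>I\<close> (or \<open>R\<close>), and that \<open>g\<close> turns
  disjoint unions of indicators into maxima; this is exactly what \<open>f\<close> commuting with \<open>g\<close>
  means. On the other hand, every term operation of \<open>T\<close> preserves the relation
  \<open>A\<^sup>2 - {(1,1),(n,n)}\<close>, since \<open>T\<close> only takes the values \<open>0, 1\<close> and \<open>T(X) = 1\<close> forces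
  the corner entry \<open>X\<^sub>n\<^sub>n = n\<close>; but \<open>f\<close> maps the related pair \<open>I, R\<close> to \<open>(1,1)\<close>.
\<close>

definition opT_mat :: "nat \<Rightarrow> (nat \<Rightarrow> nat \<Rightarrow> nat) \<Rightarrow> nat" where
  "opT_mat n X =
     of_bool ((\<forall>a<n. \<forall>b<n. X a b = a + 1) \<or> (\<forall>a<n. \<forall>b<n. X a b = b + 1))"

lemma opT_conv_opT_mat: "snd (opT n) xs = opT_mat n (\<lambda>a b. xs ! (a * n + b))"
  by (simp add: opT_def opT_mat_def)

lemma index_lt_square:
  assumes "a < (n::nat)" "b < n" shows "a * n + b < n * n"
proof -
  have "a * n + b < Suc a * n" using assms(2) by simp
  also have "\<dots> \<le> n * n" using assms(1) by (intro mult_le_mono1) simp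
  finally show ?thesis .
qed

lemma opT_mat_cong:
  "(\<And>a b. a < n \<Longrightarrow> b < n \<Longrightarrow> X a b = Y a b) \<Longrightarrow> opT_mat n X = opT_mat n Y"
  by (simp add: opT_mat_def)

lemma opT_matrix_list:
  "snd (opT n) (map (\<lambda>j. X (j div n) (j mod n)) [0..<n * n]) = opT_mat n X"
  unfolding opT_conv_opT_mat by (rule opT_mat_cong) (simp add: index_lt_square)

lemma opT_mat_le_1: "opT_mat n X \<le> 1"
  by (simp add: opT_mat_def)

lemma opT_mat_rows [simp]: "opT_mat n (\<lambda>a b. Suc a) = 1"
  and opT_mat_cols [simp]: "opT_mat n (\<lambda>a b. Suc b) = 1"
  by (simp_all add: opT_mat_def)

lemma opT_mat_eq_1_iff:
  "opT_mat n X = 1 \<longleftrightarrow> (\<forall>a<n. \<forall>b<n. X a b = a + 1) \<or> (\<forall>a<n. \<forall>b<n. X a b = b + 1)"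
  by (simp add: opT_mat_def)

lemma opT_mat_eq_1_diag:
  assumes "opT_mat n X = 1" "a < n" shows "X a a = a + 1"
  using assms(1)[unfolded opT_mat_eq_1_iff] assms(2) by blast

lemma opT_mat_row_const:
  assumes "n \<ge> 2" shows "opT_mat n (\<lambda>a b. h a) = of_bool (\<forall>a<n. h a = a + 1)"
  using assms unfolding opT_mat_def by force

lemma opT_mat_const [simp]:
  assumes "n \<ge> 2" shows "opT_mat n (\<lambda>a b. c) = 0"
proof -
  have "\<not> (\<forall>a<n. c = a + 1)"
  proof
    assume "\<forall>a<n. c = a + 1"
    then have "c = 0 + 1" "c = 1 + 1" using assms by auto
    then show False by simp
  qed
  then show ?thesis using opT_mat_row_const[OF assms, of "\<lambda>a. c"] by simp
qed

lemma commutes_opT_mat: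
  assumes "commutes A g (opT n)"
    and "\<And>i a b. i < fst g \<Longrightarrow> a < n \<Longrightarrow> b < n \<Longrightarrow> X i a b \<in> A"
  shows "snd g (map (\<lambda>i. opT_mat n (X i)) [0..<fst g])
       = opT_mat n (\<lambda>a b. snd g (map (\<lambda>i. X i a b) [0..<fst g]))"
proof -
  have "X i (j div n) (j mod n) \<in> A" if "i < fst g" "j < n * n" for i j
  proof -
    have "n > 0" using \<open>j < n * n\<close> by (cases n) simp_all
    then show ?thesis using assms(2) that by (simp add: less_mult_imp_div_less)
  qed
  then have "snd g (map (\<lambda>i. snd (opT n) (map (\<lambda>j. X i (j div n) (j mod n)) [0..<n * n]))
        [0..<fst g])
      = snd (opT n) (map (\<lambda>j. snd g (map (\<lambda>i. X i (j div n) (j mod n)) [0..<fst g]))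
        [0..<n * n])"
    using assms(1) unfolding commutes_def Let_def by (simp add: opT_def)
  then show ?thesis
    by (simp only: opT_matrix_list[where X = "\<lambda>a b. snd g (map (\<lambda>i. X i a b) [0..<fst g])"]
        opT_matrix_list)
qed

definition block_list :: "nat \<Rightarrow> nat set \<Rightarrow> nat set \<Rightarrow> nat \<Rightarrow> nat \<Rightarrow> nat list" where
  "block_list m U W p q = map (\<lambda>i. if i \<in> U then p else if i \<in> W then q else 0) [0..<m]"

lemma commutes_opT_block_list:
  assumes "commutes {0..<Suc n} g (opT n)" "n \<ge> 2"
    and "\<forall>a<n. \<forall>b<n. P a b \<le> n \<and> Q a b \<le> n"
  shows "snd g (block_list (fst g) U W (opT_mat n P) (opT_mat n Q))
       = opT_mat n (\<lambda>a b. snd g (block_list (fst g) U W (P a b) (Q a b)))"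
proof -
  define X where "X i = (if i \<in> U then P else if i \<in> W then Q else (\<lambda>a b. 0))" for i
  have "opT_mat n (X i) = (if i \<in> U then opT_mat n P else if i \<in> W then opT_mat n Q else 0)"
    for i using \<open>n \<ge> 2\<close> by (simp add: X_def)
  then have "block_list (fst g) U W (opT_mat n P) (opT_mat n Q)
      = map (\<lambda>i. opT_mat n (X i)) [0..<fst g]"
    by (simp add: block_list_def)
  moreover have "X i a b \<in> {0..<Suc n}" if "a < n" "b < n" for i a b
    using assms(3) that by (simp add: X_def less_Suc_eq_le)
  moreover have "map (\<lambda>i. X i a b) [0..<fst g] = block_list (fst g) U W (P a b) (Q a b)" for a b
    by (simp add: X_def block_list_def)
  ultimately show ?thesis
    using commutes_opT_mat[OF assms(1), of X] by simp
qed

lemma opT_mat_commuting_binary_join: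
  fixes \<phi> :: "nat \<Rightarrow> nat \<Rightarrow> nat"
  assumes "n \<ge> 2"
    and hom: "\<And>P Q. \<forall>a<n. \<forall>b<n. P a b \<le> n \<and> Q a b \<le> n \<Longrightarrow>
      \<phi> (opT_mat n P) (opT_mat n Q) = opT_mat n (\<lambda>a b. \<phi> (P a b) (Q a b))"
  shows "\<phi> 1 1 = max (\<phi> 1 0) (\<phi> 0 1)"
proof -
  have row: "\<phi> 1 0 = opT_mat n (\<lambda>a b. \<phi> (a + 1) c)" if "c \<le> n" for c
    using hom[of "\<lambda>a b. a + 1" "\<lambda>a b. c"] that \<open>n \<ge> 2\<close> by simp
  have col: "\<phi> 0 1 = opT_mat n (\<lambda>a b. \<phi> c (b + 1))" if "c \<le> n" for c
    using hom[of "\<lambda>a b. c" "\<lambda>a b. b + 1"] that \<open>n \<ge> 2\<close> by simp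
  have diag: "\<phi> 1 1 = opT_mat n (\<lambda>a b. \<phi> (a + 1) (b + 1))"
    using hom[of "\<lambda>a b. a + 1" "\<lambda>a b. b + 1"] by simp
  have "1 \<le> n" "0 < n" using \<open>n \<ge> 2\<close> by simp_all
  have "\<phi> 1 0 \<le> 1" "\<phi> 0 1 \<le> 1" using row[of 0] col[of 0] opT_mat_le_1 by simp_all
  then consider "\<phi> 1 0 = 1" | "\<phi> 0 1 = 1" | "\<phi> 1 0 = 0" "\<phi> 0 1 = 0"
    by linarith
  then show ?thesis
  proof cases
    case 1
    then have "\<phi> (0 + 1) 1 = 0 + 1"
      using row[OF \<open>1 \<le> n\<close>] opT_mat_eq_1_diag \<open>0 < n\<close> by metis
    then show ?thesis using 1 col[of 0] opT_mat_le_1 by simp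
  next
    case 2
    then have "\<phi> 1 (0 + 1) = 0 + 1"
      using col[OF \<open>1 \<le> n\<close>] opT_mat_eq_1_diag \<open>0 < n\<close> by metis
    then show ?thesis using 2 row[of 0] opT_mat_le_1 by simp
  next
    case 3
    txt \<open>A row (column) pattern of \<open>\<phi> (a + 1) (b + 1)\<close> survives fixing \<open>b = 0\<close> (\<open>a = 0\<close>),
      which would force \<open>\<phi> 1 0 = 1\<close> (\<open>\<phi> 0 1 = 1\<close>).\<close>
    have "opT_mat n (\<lambda>a b. \<phi> (a + 1) (b + 1)) \<noteq> 1"
    proof
      assume "opT_mat n (\<lambda>a b. \<phi> (a + 1) (b + 1)) = 1"
      then consider "\<forall>a<n. \<forall>b<n. \<phi> (a + 1) (b + 1) = a + 1"
        | "\<forall>a<n. \<forall>b<n. \<phi> (a + 1) (b + 1) = b + 1"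
        unfolding opT_mat_eq_1_iff by blast
      then show False
      proof cases
        case 1
        then have "opT_mat n (\<lambda>a b. \<phi> (a + 1) (0 + 1)) = 1"
          using opT_mat_cong[of n _ "\<lambda>a b. a + 1"] \<open>0 < n\<close> by simp
        then show False using row[OF \<open>1 \<le> n\<close>] 3 by simp
      next
        case 2
        then have "opT_mat n (\<lambda>a b. \<phi> (0 + 1) (b + 1)) = 1"
          using opT_mat_cong[of n _ "\<lambda>a b. b + 1"] \<open>0 < n\<close> by simp
        then show False using col[OF \<open>1 \<le> n\<close>] 3 by simp
      qed
    qed
    then have "\<phi> 1 1 = 0"
      using diag opT_mat_le_1[of n "\<lambda>a b. \<phi> (a + 1) (b + 1)"] by linarith
    then show ?thesis using 3 by simp
  qed
qed

lemma map_eq_ascending_iff: "map h [0..<n] = [1..<n + 1] \<longleftrightarrow> (\<forall>a<n. h a = a + 1)"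
  by (auto simp: list_eq_iff_nth_eq simp del: upt_Suc)

lemma map_upt_reflect: "map (\<lambda>a. h (n - 1 - a)) [0..<n] = rev (map h [0..<n])"
  by (simp add: list_eq_iff_nth_eq rev_nth)

lemma ascending_neq_descending:
  assumes "n \<ge> 2" shows "[1..<n + 1] \<noteq> rev [1..<n + 1]"
proof -
  have "[1..<n + 1] ! 0 = 1" "rev [1..<n + 1] ! 0 = n"
    using assms by (simp_all add: rev_nth del: upt_Suc)
  then show ?thesis using assms by auto
qed

lemma commutes_opT_ascending_columns:
  assumes "commutes {0..<Suc n} g (opT n)" "n \<ge> 2"
    and "\<And>a j. a < n \<Longrightarrow> j < fst g \<Longrightarrow> x a j \<le> n"
  shows "snd g (map (\<lambda>j. of_bool (map (\<lambda>a. x a j) [0..<n] = [1..<n + 1])) [0..<fst g])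
       = of_bool (map (\<lambda>a. snd g (map (x a) [0..<fst g])) [0..<n] = [1..<n + 1])"
  unfolding map_eq_ascending_iff using commutes_opT_mat[OF assms(1), of "\<lambda>j a b. x a j"] assms(2,3)
  by (simp add: opT_mat_row_const less_Suc_eq_le)

lemma commutes_opT_descending_columns:
  assumes "commutes {0..<Suc n} g (opT n)" "n \<ge> 2"
    and "\<And>a j. a < n \<Longrightarrow> j < fst g \<Longrightarrow> x a j \<le> n"
  shows "snd g (map (\<lambda>j. of_bool (map (\<lambda>a. x a j) [0..<n] = rev [1..<n + 1])) [0..<fst g])
       = of_bool (map (\<lambda>a. snd g (map (x a) [0..<fst g])) [0..<n] = rev [1..<n + 1])"
proof -
  have "snd g (map (\<lambda>j. of_bool (map (\<lambda>a. x (n - 1 - a) j) [0..<n] = [1..<n + 1])) [0..<fst g])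
      = of_bool (map (\<lambda>a. snd g (map (x (n - 1 - a)) [0..<fst g])) [0..<n] = [1..<n + 1])"
    by (rule commutes_opT_ascending_columns[OF assms(1,2)]) (simp add: assms(3))
  moreover have "map (\<lambda>a. x (n - 1 - a) j) [0..<n] = rev (map (\<lambda>a. x a j) [0..<n])" for j
    by (rule map_upt_reflect)
  moreover have "map (\<lambda>a. snd g (map (x (n - 1 - a)) [0..<fst g])) [0..<n]
      = rev (map (\<lambda>a. snd g (map (x a) [0..<fst g])) [0..<n])"
    by (rule map_upt_reflect)
  ultimately show ?thesis by (simp only: rev_swap)
qed

lemma opf_commutes_with_opT_centraliser:
  assumes "n \<ge> 2" and g: "commutes {0..<Suc n} g (opT n)"
  shows "commutes {0..<Suc n} (opf n) g"
  unfolding commutes_def Let_def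
proof (intro allI impI)
  fix x :: "nat \<Rightarrow> nat \<Rightarrow> nat"
  assume "\<forall>i<fst (opf n). \<forall>j<fst g. x i j \<in> {0..<Suc n}"
  then have x_le: "x a j \<le> n" if "a < n" "j < fst g" for a j
    using that by (simp add: opf_def less_Suc_eq_le)
  define I where "I = [1..<n + 1]"
  define col where "col j = map (\<lambda>a. x a j) [0..<n]" for j
  define g_rows where "g_rows = map (\<lambda>a. snd g (map (x a) [0..<fst g])) [0..<n]"
  define U where "U = {j. col j = I}"
  define W where "W = {j. col j = rev I}"
  define \<phi> where "\<phi> p q = snd g (block_list (fst g) U W p q)" for p q
  have "I \<noteq> rev I" unfolding I_def using ascending_neq_descending[OF \<open>n \<ge> 2\<close>] .
  have "\<phi> 1 0 = snd g (map (\<lambda>j. of_bool (col j = I)) [0..<fst g])"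
    unfolding \<phi>_def block_list_def U_def by (intro arg_cong[where f = "snd g"] map_cong) auto
  also have "\<dots> = of_bool (g_rows = I)"
    unfolding col_def g_rows_def I_def
    by (rule commutes_opT_ascending_columns[OF g \<open>n \<ge> 2\<close>]) (fact x_le)
  finally have \<phi>_10: "\<phi> 1 0 = of_bool (g_rows = I)" .
  have "\<phi> 0 1 = snd g (map (\<lambda>j. of_bool (col j = rev I)) [0..<fst g])"
    unfolding \<phi>_def block_list_def U_def W_def using \<open>I \<noteq> rev I\<close>
    by (intro arg_cong[where f = "snd g"] map_cong) auto
  also have "\<dots> = of_bool (g_rows = rev I)"
    unfolding col_def g_rows_def I_def
    by (rule commutes_opT_descending_columns[OF g \<open>n \<ge> 2\<close>]) (fact x_le)
  finally have \<phi>_01: "\<phi> 0 1 = of_bool (g_rows = rev I)" .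
  have "snd (opf n) (map (\<lambda>i. snd g (map (\<lambda>j. x i j) [0..<fst g])) [0..<fst (opf n)])
      = of_bool (g_rows = I \<or> g_rows = rev I)"
    by (simp add: opf_def g_rows_def I_def del: upt_Suc)
  also have "\<dots> = max (\<phi> 1 0) (\<phi> 0 1)"
    unfolding \<phi>_10 \<phi>_01 by simp
  also have "\<dots> = \<phi> 1 1"
  proof (rule opT_mat_commuting_binary_join[OF \<open>n \<ge> 2\<close>, symmetric])
    fix P Q assume "\<forall>a<n. \<forall>b<n. P a b \<le> n \<and> Q a b \<le> n"
    then show "\<phi> (opT_mat n P) (opT_mat n Q) = opT_mat n (\<lambda>a b. \<phi> (P a b) (Q a b))"
      unfolding \<phi>_def by (rule commutes_opT_block_list[OF g \<open>n \<ge> 2\<close>])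
  qed
  also have "\<dots> = snd g (map (\<lambda>j. snd (opf n) (map (\<lambda>i. x i j) [0..<fst (opf n)])) [0..<fst g])"
    unfolding \<phi>_def block_list_def U_def W_def col_def I_def
    by (intro arg_cong[where f = "snd g"] map_cong) (auto simp: opf_def)
  finally show "snd (opf n) (map (\<lambda>i. snd g (map (\<lambda>j. x i j) [0..<fst g])) [0..<fst (opf n)])
      = snd g (map (\<lambda>j. snd (opf n) (map (\<lambda>i. x i j) [0..<fst (opf n)])) [0..<fst g])" .
qed

definition preserves :: "(nat \<Rightarrow> nat \<Rightarrow> bool) \<Rightarrow> op \<Rightarrow> bool" where
  "preserves R f \<longleftrightarrow> (\<forall>u v. length u = fst f \<longrightarrow> list_all2 R u v \<longrightarrow> R (snd f u) (snd f v))"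

lemma clone_terms_preserves:
  assumes "h \<in> clone_terms A F" and "\<forall>f\<in>F. preserves R f"
  shows "preserves R h"
  using assms(1)
proof (induction h rule: clone_terms.induct)
  case (proj m i)
  then show ?case by (simp add: preserves_def list_all2_nthD)
next
  case (base f)
  then show ?case using assms(2) by blast
next
  case (comp n h gs m)
  show ?case unfolding preserves_def
  proof (intro allI impI)
    fix u v assume "length u = fst (m, \<lambda>xs. h (map (\<lambda>g. g xs) gs))" "list_all2 R u v"
    then have "R (g u) (g v)" if "g \<in> set gs" for g
      using comp.IH(2) that by (simp add: preserves_def)
    then have "list_all2 R (map (\<lambda>g. g u) gs) (map (\<lambda>g. g v) gs)"
      by (simp add: list_all2_conv_all_nth)
    then show "R (snd (m, \<lambda>xs. h (map (\<lambda>g. g xs) gs)) u) (snd (m, \<lambda>xs. h (map (\<lambda>g. g xs) gs)) v)"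
      using comp.IH(1) comp.hyps(2) by (simp add: preserves_def)
  qed
qed

definition not_both_1_nor_both_n :: "nat \<Rightarrow> nat \<Rightarrow> nat \<Rightarrow> bool" where
  "not_both_1_nor_both_n n p q \<longleftrightarrow> \<not> (p = 1 \<and> q = 1) \<and> \<not> (p = n \<and> q = n)"

lemma opT_preserves: "n \<ge> 2 \<Longrightarrow> preserves (not_both_1_nor_both_n n) (opT n)"
  unfolding preserves_def
proof (intro allI impI)
  fix u v assume "n \<ge> 2" and "length u = fst (opT n)"
    and uv: "list_all2 (not_both_1_nor_both_n n) u v"
  show "not_both_1_nor_both_n n (snd (opT n) u) (snd (opT n) v)"
  proof (rule ccontr)
    assume "\<not> ?thesis"
    moreover have "snd (opT n) u \<le> 1" "snd (opT n) v \<le> 1"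
      unfolding opT_conv_opT_mat by (rule opT_mat_le_1)+
    ultimately have "snd (opT n) u = 1" "snd (opT n) v = 1"
      using \<open>n \<ge> 2\<close> by (auto simp: not_both_1_nor_both_n_def)
    moreover have "n - 1 < n" using \<open>n \<ge> 2\<close> by simp
    ultimately have "u ! ((n - 1) * n + (n - 1)) = n" "v ! ((n - 1) * n + (n - 1)) = n"
      using opT_mat_eq_1_diag by (fastforce simp: opT_conv_opT_mat)+
    moreover have "(n - 1) * n + (n - 1) < length u"
      using \<open>length u = fst (opT n)\<close> index_lt_square[OF \<open>n - 1 < n\<close> \<open>n - 1 < n\<close>]
      by (simp add: opT_def)
    ultimately show False
      using list_all2_nthD[OF uv] by (simp add: not_both_1_nor_both_n_def)
  qed
qed

lemma opf_not_in_opT_clone: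
  assumes "n \<ge> 2" shows "\<not> in_clone {0..<Suc n} (opf n) {opT n}"
proof
  assume "in_clone {0..<Suc n} (opf n) {opT n}"
  then obtain g where g: "(n, g) \<in> clone_terms {0..<Suc n} {opT n}"
    and agree: "\<And>xs. length xs = n \<Longrightarrow> set xs \<subseteq> {0..<Suc n} \<Longrightarrow> g xs = snd (opf n) xs"
    unfolding in_clone_def by (auto simp: opf_def)
  define I where "I = [1..<n + 1]"
  have "length I = n" "list_all2 (not_both_1_nor_both_n n) I (rev I)"
    using assms
    by (auto simp: list_all2_conv_all_nth I_def rev_nth not_both_1_nor_both_n_def simp del: upt_Suc)
  moreover have "preserves (not_both_1_nor_both_n n) (n, g)"
    using clone_terms_preserves[OF g] opT_preserves[OF assms] by simp
  ultimately have "not_both_1_nor_both_n n (g I) (g (rev I))"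
    unfolding preserves_def by simp
  moreover have "g I = 1" "g (rev I) = 1" using agree by (simp_all add: I_def opf_def)
  ultimately show False by (simp add: not_both_1_nor_both_n_def)
qed

lemma opf_is_op: "n \<ge> 1 \<Longrightarrow> is_op {0..<Suc n} (opf n)"
  by (simp add: is_op_def opf_def)

theorem corollary3p14:
  fixes k :: nat
  assumes "k \<ge> 3"
  shows "opf (k - 1) \<in> centraliser {0..<k} (centraliser {0..<k} {opT (k - 1)})
       \<and> \<not> in_clone {0..<k} (opf (k - 1)) {opT (k - 1)}"
proof -
  obtain n where k: "k = Suc n" and "n \<ge> 2" using assms by (cases k) auto
  have "commutes {0..<Suc n} (opf n) g" if "g \<in> centraliser {0..<Suc n} {opT n}" for g
    using that opf_commutes_with_opT_centraliser[OF \<open>n \<ge> 2\<close>] by (simp add: centraliser_def)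
  then show ?thesis
    using opf_is_op opf_not_in_opT_clone[OF \<open>n \<ge> 2\<close>] \<open>n \<ge> 2\<close>
    by (simp add: k centraliser_def)
qed

end
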